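(* Let $N\ge1$, $h,\varepsilon\in(0,1)$, and let $\Phi:[-1,1]^N\to[-1,1]^N$ be the opinion operator defined in the context. Let $V^0=(v^0_1,\dots,v^0_N)\in[-1,1]^N$ with $v^0_1\le\dots\le v^0_N$, and let $V^n=\Phi^n(V^0)=(v^n_1,\dots,v^n_N)$. Then: (a) for every $n\ge0$, $v^n_1\le\dots\le v^n_N$; (b) if $v^n_k=1$, then $v^n_l=1$ for all $l>k$; (c) if $v^n_k=1$, then $v^m_k=1$ for all $m>n$.
   Context: For $V=(v_1,\dots,v_N)\in[-1,1]^N$ and each $k$, let $J(v_k)=\{l\in\{1,\dots,N\}:|v_l-v_k|\le\varepsilon\}$ and $I(v_k)=|J(v_k)|$. Put $w_k(V)=v_k+\frac{h}{I(v_k)}\sum_{l\in J(v_k)}v_l$. Then $\Phi(V)=(v_1',\dots,v_N')$ where $v_k'=-1$ if $w_k<-1$, $v_k'=1$ if $w_k>1$, and $v_k'=w_k$ if $|w_k|\le1$. *)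

theory Defs
  imports Complex_Main
begin

(* Opinion vectors V = (v_1,...,v_N) are represented as functions nat => real,
   with only indices 1..N meaningful. *)

definition J :: "nat \<Rightarrow> real \<Rightarrow> (nat \<Rightarrow> real) \<Rightarrow> nat \<Rightarrow> nat set" where
  "J N \<epsilon> V k = {l \<in> {1..N}. \<bar>V l - V k\<bar> \<le> \<epsilon>}"

definition I :: "nat \<Rightarrow> real \<Rightarrow> (nat \<Rightarrow> real) \<Rightarrow> nat \<Rightarrow> nat" where
  "I N \<epsilon> V k = card (J N \<epsilon> V k)"

definition w :: "nat \<Rightarrow> real \<Rightarrow> real \<Rightarrow> (nat \<Rightarrow> real) \<Rightarrow> nat \<Rightarrow> real" where
  "w N h \<epsilon> V k = V k + h / real (I N \<epsilon> V k) * (\<Sum>l\<in>J N \<epsilon> V k. V l)"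

definition clip :: "real \<Rightarrow> real" where
  "clip x = (if x < -1 then -1 else if x > 1 then 1 else x)"

definition Phi :: "nat \<Rightarrow> real \<Rightarrow> real \<Rightarrow> (nat \<Rightarrow> real) \<Rightarrow> (nat \<Rightarrow> real)" where
  "Phi N h \<epsilon> V = (\<lambda>k. if k \<in> {1..N} then clip (w N h \<epsilon> V k) else 0)"

end

theory Submission
  imports Defs
begin

(* The update is order preserving: if v_k <= v_l, every agent that k listens to but l does
   not lies below all of J(v_l), and every agent that only l listens to lies above all of
   J(v_k), so the mean over J(v_k) is at most the mean over J(v_l); clipping is monotone.
   An agent at 1 only listens to agents with opinion at least 1 - eps > 0, so its update
   is at least 1 and clipping returns 1 again. Ordered opinions bounded by 1 then force
   every agent above an agent at 1 to be at 1 as well. *)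

lemma clip_mono: "x \<le> y \<Longrightarrow> clip x \<le> clip y"
  by (auto simp: clip_def)

lemma clip_le_one: "clip x \<le> 1"
  by (simp add: clip_def)

lemma clip_eq_one: "1 \<le> x \<Longrightarrow> clip x = 1"
  by (simp add: clip_def)

lemma sum_diff_square_eq_0:
  fixes v :: "'a \<Rightarrow> real"
  shows "(\<Sum>(a, b)\<in>C \<times> C. v b - v a) = 0"
  by (simp add: sum.cartesian_product[symmetric] sum_subtractf sum_distrib_left
      sum.swap[of "\<lambda>a b. v a"])

lemma mean_le_mean:
  fixes v :: "'a \<Rightarrow> real"
  assumes "finite A" "finite B" "A \<noteq> {}" "B \<noteq> {}"
    and below: "\<And>a b. a \<in> A - B \<Longrightarrow> b \<in> B \<Longrightarrow> v a \<le> v b"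
    and above: "\<And>a b. a \<in> A \<Longrightarrow> b \<in> B - A \<Longrightarrow> v a \<le> v b"
  shows "sum v A / card A \<le> sum v B / card B"
proof -
  let ?C = "A \<inter> B"
  have "(\<Sum>(a, b)\<in>A \<times> B. v b - v a)
      = (\<Sum>(a, b)\<in>A \<times> B - ?C \<times> ?C. v b - v a) + (\<Sum>(a, b)\<in>?C \<times> ?C. v b - v a)"
    using assms(1,2) by (intro sum.subset_diff) auto
  also have "\<dots> = (\<Sum>(a, b)\<in>A \<times> B - ?C \<times> ?C. v b - v a)"
    by (simp add: sum_diff_square_eq_0)
  also have "\<dots> \<ge> 0"
  proof (rule sum_nonneg)
    fix p assume "p \<in> A \<times> B - ?C \<times> ?C"
    then obtain a b where "p = (a, b)" "a \<in> A - B \<and> b \<in> B \<or> a \<in> A \<and> b \<in> B - A"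
      by auto
    then show "0 \<le> (case p of (a, b) \<Rightarrow> v b - v a)"
      using below above by auto
  qed
  moreover have "(\<Sum>(a, b)\<in>A \<times> B. v b - v a) = card A * sum v B - card B * sum v A"
    by (simp add: sum.cartesian_product[symmetric] sum_subtractf sum_distrib_left)
  ultimately have "card B * sum v A \<le> card A * sum v B"
    by linarith
  moreover have "card A > 0" "card B > 0"
    using assms(1-4) by (auto simp: card_gt_0_iff)
  ultimately show ?thesis
    by (simp add: divide_simps mult.commute)
qed

lemma w_mono:
  fixes V :: "nat \<Rightarrow> real"
  assumes "0 \<le> h" "0 \<le> \<epsilon>" "k \<in> {1..N}" "l \<in> {1..N}" "V k \<le> V l"
  shows "w N h \<epsilon> V k \<le> w N h \<epsilon> V l"
proof -
  have "sum V (J N \<epsilon> V k) / card (J N \<epsilon> V k) \<le> sum V (J N \<epsilon> V l) / card (J N \<epsilon> V l)"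
    using assms(2-5) by (intro mean_le_mean) (auto simp: J_def)
  then have "h * (sum V (J N \<epsilon> V k) / card (J N \<epsilon> V k))
      \<le> h * (sum V (J N \<epsilon> V l) / card (J N \<epsilon> V l))"
    using \<open>0 \<le> h\<close> by (rule mult_left_mono)
  then show ?thesis
    using \<open>V k \<le> V l\<close> by (simp add: w_def I_def)
qed

lemma w_ge_one:
  fixes V :: "nat \<Rightarrow> real"
  assumes "0 \<le> h" "\<epsilon> < 1" "V k = 1"
  shows "1 \<le> w N h \<epsilon> V k"
proof -
  have "0 \<le> sum V (J N \<epsilon> V k)"
    using assms(2,3) by (intro sum_nonneg) (auto simp: J_def abs_le_iff)
  then show ?thesis
    using assms(1,3) by (simp add: w_def)
qed

lemma mono_on_Phi:
  assumes "0 \<le> h" "0 \<le> \<epsilon>" "mono_on {1..N} V"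
  shows "mono_on {1..N} (Phi N h \<epsilon> V)"
proof (rule mono_onI)
  fix k l assume "k \<in> {1..N}" "l \<in> {1..N}" "k \<le> l"
  with \<open>mono_on {1..N} V\<close> have "V k \<le> V l"
    by (rule mono_onD)
  then have "w N h \<epsilon> V k \<le> w N h \<epsilon> V l"
    using assms(1,2) \<open>k \<in> {1..N}\<close> \<open>l \<in> {1..N}\<close> by (intro w_mono)
  then show "Phi N h \<epsilon> V k \<le> Phi N h \<epsilon> V l"
    using \<open>k \<in> {1..N}\<close> \<open>l \<in> {1..N}\<close> by (simp add: Phi_def clip_mono)
qed

lemma Phi_le_one: "Phi N h \<epsilon> V k \<le> 1"
  by (simp add: Phi_def clip_le_one)

lemma Phi_eq_one:
  assumes "0 \<le> h" "\<epsilon> < 1" "k \<in> {1..N}" "V k = 1"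
  shows "Phi N h \<epsilon> V k = 1"
  using assms by (simp add: Phi_def clip_eq_one w_ge_one)

lemma mono_on_funpow_Phi:
  assumes "0 \<le> h" "0 \<le> \<epsilon>" "mono_on {1..N} V"
  shows "mono_on {1..N} ((Phi N h \<epsilon> ^^ n) V)"
proof (induction n)
  case 0
  then show ?case using assms(3) by simp
next
  case (Suc n)
  have "mono_on {1..N} (Phi N h \<epsilon> ((Phi N h \<epsilon> ^^ n) V))"
    using assms(1,2) Suc.IH by (rule mono_on_Phi)
  then show ?case by simp
qed

lemma funpow_Phi_le_one:
  assumes "\<forall>k\<in>{1..N}. V k \<le> 1" "k \<in> {1..N}"
  shows "(Phi N h \<epsilon> ^^ n) V k \<le> 1"
  using assms by (cases n) (simp_all add: Phi_le_one)

lemma funpow_Phi_stays_one: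
  assumes "0 \<le> h" "\<epsilon> < 1" "k \<in> {1..N}" "(Phi N h \<epsilon> ^^ n) V k = 1" "n \<le> m"
  shows "(Phi N h \<epsilon> ^^ m) V k = 1"
  using \<open>n \<le> m\<close>
proof (induction m rule: dec_induct)
  case base
  then show ?case using assms(4) .
next
  case (step m)
  then show ?case
    using assms(1-3) by (simp add: Phi_eq_one)
qed

lemma mono_on_le_one_eq_one:
  fixes V :: "'a::order \<Rightarrow> real"
  assumes "mono_on A V" "\<forall>l\<in>A. V l \<le> 1" "k \<in> A" "l \<in> A" "k \<le> l" "V k = 1"
  shows "V l = 1"
  using assms by (metis antisym mono_onD)

theorem corollary1:
  fixes N :: nat and h \<epsilon> :: real and V0 :: "nat \<Rightarrow> real"
  assumes "N \<ge> 1"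
    and "0 < h" "h < 1" "0 < \<epsilon>" "\<epsilon> < 1"
    and "\<forall>k\<in>{1..N}. V0 k \<in> {-1..1}"
    and "\<forall>k\<in>{1..N}. \<forall>l\<in>{1..N}. k \<le> l \<longrightarrow> V0 k \<le> V0 l"
  shows "(\<forall>n. \<forall>k\<in>{1..N}. \<forall>l\<in>{1..N}. k \<le> l \<longrightarrow>
            ((Phi N h \<epsilon> ^^ n) V0) k \<le> ((Phi N h \<epsilon> ^^ n) V0) l)
       \<and> (\<forall>n. \<forall>k\<in>{1..N}. ((Phi N h \<epsilon> ^^ n) V0) k = 1 \<longrightarrow>
            (\<forall>l\<in>{1..N}. l > k \<longrightarrow> ((Phi N h \<epsilon> ^^ n) V0) l = 1))
       \<and> (\<forall>n. \<forall>k\<in>{1..N}. ((Phi N h \<epsilon> ^^ n) V0) k = 1 \<longrightarrow>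
            (\<forall>m>n. ((Phi N h \<epsilon> ^^ m) V0) k = 1))"
proof -
  have "mono_on {1..N} V0"
    using assms(7) by (auto intro: mono_onI)
  then have ordered: "mono_on {1..N} ((Phi N h \<epsilon> ^^ n) V0)" for n
    using assms(2,4) by (intro mono_on_funpow_Phi) auto
  have bounded: "\<forall>l\<in>{1..N}. (Phi N h \<epsilon> ^^ n) V0 l \<le> 1" for n
    using assms(6) by (simp add: funpow_Phi_le_one)
  have "(Phi N h \<epsilon> ^^ n) V0 l = 1"
    if "k \<in> {1..N}" "l \<in> {1..N}" "k < l" "(Phi N h \<epsilon> ^^ n) V0 k = 1" for n k l
    using mono_on_le_one_eq_one[OF ordered bounded] that by simp
  moreover have "(Phi N h \<epsilon> ^^ m) V0 k = 1"
    if "k \<in> {1..N}" "(Phi N h \<epsilon> ^^ n) V0 k = 1" "n < m" for n m k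
    using funpow_Phi_stays_one[of h \<epsilon> k N n V0 m] assms(2,5) that by simp
  ultimately show ?thesis
    using ordered by (blast dest: mono_onD)
qed

end
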